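(* Let $\zeta=e^{5\pi i/6}$ (a primitive $12$th root of unity) and $m^{I}=\begin{pmatrix}\frac23&-\frac7{12}\\-\frac7{12}&\frac23\end{pmatrix}$, $m^{II}=\begin{pmatrix}\frac23&-\frac34\\-\frac34&1\end{pmatrix}$, $m^{III}=\begin{pmatrix}\frac16&-\frac14\\-\frac14&1\end{pmatrix}$. Then the braidings $e^{i\pi m^{X}_{kl}}$ have diagrams: I: $q_{11}=q_{22}=-\zeta^2$, $q_{12}q_{21}=\zeta$, Cartan matrix $\begin{pmatrix}2&-2\\-2&2\end{pmatrix}$; II: $q_{11}=-\zeta^2$, $q_{22}=-1$, $q_{12}q_{21}=\zeta^3$, Cartan matrix $\begin{pmatrix}2&-2\\-1&2\end{pmatrix}$; III: $q_{11}=-\zeta^{-1}$, $q_{22}=-1$, $q_{12}q_{21}=-\zeta^3$, Cartan matrix $\begin{pmatrix}2&-3\\-1&2\end{pmatrix}$. Moreover $m^{II}$ is the reflection $\mathcal R^1$ of $m^I$ (new simple roots $-\alpha_1,\alpha_2+2\alpha_1$), $m^{III}=P^Tm^{II}P$ with $P=\begin{pmatrix}1&0\\1&-1\end{pmatrix}$ (the reflection of chamber II at its second simple root), and $m^I$ realises $q^I$; in these chambers every simple root is $m$-truncation except the first simple root of chamber III, which is $m$-Cartan.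
   Context: Let $q=(q_{ij})$ be a diagonal braiding matrix, $\chi$ the bicharacter on $\mathbb Z^n$ with $\chi(\alpha_i,\alpha_j)=q_{ij}$ on the standard basis. Its Cartan matrix has $a_{ii}=2$ and $a_{ij}=-\min\{s\in\mathbb Z_{\ge0}:q_{ii}^{-s}=q_{ij}q_{ji}\text{ or }q_{ii}^{s+1}=1\}$. The reflection $\mathcal R^k$ is $\alpha_i\mapsto\alpha_i-a_{ki}\alpha_k$; reflected braiding $\chi(\mathcal R^k\alpha_i,\mathcal R^k\alpha_j)$; for a real symmetric $m$ (Gram matrix of $(\cdot,\cdot)_m$), $\mathcal R^k(m)_{ij}=(\mathcal R^k\alpha_i,\mathcal R^k\alpha_j)_m$. Condition (A) for a pair $i\neq j$: $2m_{ij}=a_{ij}m_{ii}$; (B): $(1-a_{ij})m_{ii}=2$. $m$ realises $q$ if $e^{i\pi m_{ij}}=q_{ij}$, every pair satisfies (A) or (B), and this persists after any finite sequence of reflections (each using the current Cartan matrix). A simple root is $m$-Cartan if (A) holds for all pairs $(i,j)$, $j\ne i$, and $m$-truncation if (B) does. *)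

theory Defs
  imports Complex_Main
begin

(* Conventions: simple roots are indexed 0..n-1 (paper's alpha_1 is index 0,
   alpha_2 is index 1). A braiding matrix is q :: nat => nat => complex and a
   real symmetric Gram matrix is m :: nat => nat => real; only entries with
   indices < n matter. *)

type_synonym braiding = "nat \<Rightarrow> nat \<Rightarrow> complex"
type_synonym gram = "nat \<Rightarrow> nat \<Rightarrow> real"

definition cartan :: "braiding \<Rightarrow> nat \<Rightarrow> nat \<Rightarrow> int" where
  "cartan q i j = (if i = j then 2
     else - int (LEAST s::nat. q i i powi (- int s) = q i j * q j i \<or> q i i ^ (s + 1) = 1))"

text \<open>Reflected braiding chi(R^k alpha_i, R^k alpha_j) where
  R^k alpha_i = alpha_i - a_ki alpha_k, chi the bicharacter of q.\<close>
definition refl_braiding :: "braiding \<Rightarrow> nat \<Rightarrow> braiding" where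
  "refl_braiding q k i j =
     q i j * q k j powi (- cartan q k i) * q i k powi (- cartan q k j)
       * q k k powi (cartan q k i * cartan q k j)"

text \<open>Reflected Gram matrix R^k(m)_ij = (R^k alpha_i, R^k alpha_j)_m,
  with the Cartan matrix of the braiding q.\<close>
definition refl_gram :: "braiding \<Rightarrow> gram \<Rightarrow> nat \<Rightarrow> gram" where
  "refl_gram q m k i j =
     m i j - of_int (cartan q k i) * m k j - of_int (cartan q k j) * m i k
       + of_int (cartan q k i * cartan q k j) * m k k"

fun refl_seq :: "braiding \<times> gram \<Rightarrow> nat list \<Rightarrow> braiding \<times> gram" where
  "refl_seq qm [] = qm"
| "refl_seq (q, m) (k # ks) = refl_seq (refl_braiding q k, refl_gram q m k) ks"

definition condA :: "braiding \<Rightarrow> gram \<Rightarrow> nat \<Rightarrow> nat \<Rightarrow> bool" where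
  "condA q m i j \<longleftrightarrow> 2 * m i j = of_int (cartan q i j) * m i i"

definition condB :: "braiding \<Rightarrow> gram \<Rightarrow> nat \<Rightarrow> nat \<Rightarrow> bool" where
  "condB q m i j \<longleftrightarrow> (1 - of_int (cartan q i j)) * m i i = 2"

definition pairs_ok :: "nat \<Rightarrow> braiding \<Rightarrow> gram \<Rightarrow> bool" where
  "pairs_ok n q m \<longleftrightarrow> (\<forall>i<n. \<forall>j<n. i \<noteq> j \<longrightarrow> condA q m i j \<or> condB q m i j)"

definition symmetric_gram :: "nat \<Rightarrow> gram \<Rightarrow> bool" where
  "symmetric_gram n m \<longleftrightarrow> (\<forall>i<n. \<forall>j<n. m i j = m j i)"

definition realises :: "nat \<Rightarrow> gram \<Rightarrow> braiding \<Rightarrow> bool" where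
  "realises n m q \<longleftrightarrow> symmetric_gram n m
     \<and> (\<forall>i<n. \<forall>j<n. exp (\<i> * of_real pi * of_real (m i j)) = q i j)
     \<and> (\<forall>ks. set ks \<subseteq> {..<n} \<longrightarrow>
            pairs_ok n (fst (refl_seq (q, m) ks)) (snd (refl_seq (q, m) ks)))"

definition braid_of :: "gram \<Rightarrow> braiding" where
  "braid_of m i j = exp (\<i> * of_real pi * of_real (m i j))"

definition m_cartan :: "nat \<Rightarrow> braiding \<Rightarrow> gram \<Rightarrow> nat \<Rightarrow> bool" where
  "m_cartan n q m i \<longleftrightarrow> (\<forall>j<n. j \<noteq> i \<longrightarrow> condA q m i j)"

definition m_truncation :: "nat \<Rightarrow> braiding \<Rightarrow> gram \<Rightarrow> nat \<Rightarrow> bool" where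
  "m_truncation n q m i \<longleftrightarrow> (\<forall>j<n. j \<noteq> i \<longrightarrow> condB q m i j)"

definition mat2 :: "'a \<Rightarrow> 'a \<Rightarrow> 'a \<Rightarrow> 'a \<Rightarrow> nat \<Rightarrow> nat \<Rightarrow> 'a" where
  "mat2 a b c d i j = (if i = 0 then (if j = 0 then a else b) else (if j = 0 then c else d))"

definition zeta12 :: complex where
  "zeta12 = exp (5 * of_real pi * \<i> / 6)"

definition mI :: gram where "mI = mat2 (2/3) (-7/12) (-7/12) (2/3)"
definition mII :: gram where "mII = mat2 (2/3) (-3/4) (-3/4) 1"
definition mIII :: gram where "mIII = mat2 (1/6) (-1/4) (-1/4) 1"
definition Pmat :: gram where "Pmat = mat2 1 0 1 (-1)"

end

theory Submission imports Defs "HOL-Analysis.Complex_Transcendental" begin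

text \<open>All Gram matrices involved have entries in \<open>\<int>/12\<close>, so every braiding
  \<open>e^{i\<pi>m}\<close> is a power of a primitive 24th root of unity and each defining condition of
  the Cartan entries becomes a divisibility condition modulo 24. Reflecting \<open>m\<^sup>I\<close> at
  either simple root and continuing produces only five Gram matrices (chambers I, II, III
  and the mirror images of II and III). Because reflections of \<open>e^{i\<pi>m}\<close> are again of
  the form \<open>e^{i\<pi>R\<^sup>k(m)}\<close>, conditions (A)/(B) persist under all sequences of reflections
  once they are checked on these five matrices.\<close>

definition exp_i_pi :: "real \<Rightarrow> complex" where
  "exp_i_pi x = exp (\<i> * of_real pi * of_real x)"

lemma exp_i_pi_eq_iff: "exp_i_pi x = exp_i_pi y \<longleftrightarrow> (\<exists>n::int. x = y + 2 * of_int n)"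
proof -
  have "exp_i_pi x = exp_i_pi y \<longleftrightarrow>
      (\<exists>n::int. \<i> * of_real pi * of_real x = \<i> * of_real pi * of_real y + (of_int (2 * n) * pi) * \<i>)"
    unfolding exp_i_pi_def by (rule exp_eq)
  also have "\<dots> \<longleftrightarrow> (\<exists>n::int. \<i> * of_real (pi * x) = \<i> * of_real (pi * (y + 2 * of_int n)))"
    by (intro ex_cong1 arg_cong2[where f="(=)"]) (simp_all add: algebra_simps)
  also have "\<dots> \<longleftrightarrow> (\<exists>n::int. pi * x = pi * (y + 2 * of_int n))"
    by (simp only: mult_cancel_left of_real_eq_iff complex_i_not_zero simp_thms)
  also have "\<dots> \<longleftrightarrow> (\<exists>n::int. x = y + 2 * of_int n)"
    by simp
  finally show ?thesis .
qed

lemma exp_i_pi_eq_iff_Ints: "exp_i_pi x = exp_i_pi y \<longleftrightarrow> (x - y) / 2 \<in> \<int>"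
  unfolding exp_i_pi_eq_iff Ints_def by (auto simp: field_simps)

lemma exp_i_pi_add: "exp_i_pi (x + y) = exp_i_pi x * exp_i_pi y"
  unfolding exp_i_pi_def by (simp add: distrib_left exp_add)

lemma exp_i_pi_zero: "exp_i_pi 0 = 1"
  unfolding exp_i_pi_def by simp

lemma exp_i_pi_one: "exp_i_pi 1 = - 1"
  unfolding exp_i_pi_def by simp

lemma exp_i_pi_add_one: "exp_i_pi (x + 1) = - exp_i_pi x"
  unfolding exp_i_pi_add exp_i_pi_one by simp

lemma exp_i_pi_uminus: "exp_i_pi (- x) = inverse (exp_i_pi x)"
  unfolding exp_i_pi_def by (simp add: exp_minus[symmetric])

lemma exp_i_pi_power_int: "exp_i_pi x powi n = exp_i_pi (of_int n * x)"
  unfolding exp_i_pi_def by (simp add: exp_power_int mult_ac)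

lemma exp_i_pi_power: "exp_i_pi x ^ n = exp_i_pi (of_nat n * x)"
  using exp_i_pi_power_int[of x "int n"] by simp

lemma exp_i_pi_eq_1_iff: "exp_i_pi x = 1 \<longleftrightarrow> (\<exists>n::int. x = 2 * of_int n)"
  using exp_i_pi_eq_iff[of x 0] by (simp add: exp_i_pi_zero)

lemma braid_of_eq_exp_i_pi: "braid_of m i j = exp_i_pi (m i j)"
  unfolding braid_of_def exp_i_pi_def ..

lemma zeta12_eq_exp_i_pi: "zeta12 = exp_i_pi (5/6)"
  unfolding zeta12_def exp_i_pi_def by (simp add: mult_ac)

lemma cartan_diag: "cartan q i i = 2"
  unfolding cartan_def by simp

lemma cartan_braid_of:
  assumes "i \<noteq> j"
  shows "cartan (braid_of m) i j = - int (LEAST s::nat.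
           (\<exists>n::int. - real s * m i i = m i j + m j i + 2 * of_int n)
         \<or> (\<exists>n::int. real (s + 1) * m i i = 2 * of_int n))"
proof -
  have "braid_of m i i powi (- int s) = braid_of m i j * braid_of m j i \<or> braid_of m i i ^ (s + 1) = 1
    \<longleftrightarrow> (\<exists>n::int. - real s * m i i = m i j + m j i + 2 * of_int n)
      \<or> (\<exists>n::int. real (s + 1) * m i i = 2 * of_int n)" for s
    unfolding braid_of_eq_exp_i_pi exp_i_pi_power_int exp_i_pi_power exp_i_pi_add[symmetric]
      exp_i_pi_eq_iff exp_i_pi_eq_1_iff by simp
  then show ?thesis using assms unfolding cartan_def by simp
qed

text \<open>For Gram entries in \<open>\<int>/12\<close> the two conditions defining \<open>a\<^sub>i\<^sub>j\<close> are congruences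
  modulo 24.\<close>

lemma cartan_braid_of_twelfthsI:
  fixes D C :: int and s\<^sub>0 :: nat
  assumes "i \<noteq> j" and "m i i = of_int D / 12" and "m i j + m j i = of_int C / 12"
    and "24 dvd (- int s\<^sub>0 * D - C) \<or> 24 dvd (int (s\<^sub>0 + 1) * D)"
    and "\<forall>s<s\<^sub>0. \<not> (24 dvd (- int s * D - C) \<or> 24 dvd (int (s + 1) * D))"
  shows "cartan (braid_of m) i j = - int s\<^sub>0"
proof -
  have first_cond: "(\<exists>n::int. - real s * m i i = m i j + m j i + 2 * of_int n)
      \<longleftrightarrow> 24 dvd (- int s * D - C)" for s :: nat
  proof -
    have "(- real s * m i i = m i j + m j i + 2 * of_int n)
        \<longleftrightarrow> (of_int (- int s * D - C) :: real) = of_int (24 * n)" for n :: int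
      unfolding assms(2,3) by (simp add: field_simps)
    then show ?thesis by (simp only: of_int_eq_iff dvd_def)
  qed
  have second_cond: "(\<exists>n::int. real (s + 1) * m i i = 2 * of_int n) \<longleftrightarrow> 24 dvd (int (s + 1) * D)"
    for s :: nat
  proof -
    have "(real (s + 1) * m i i = 2 * of_int n) \<longleftrightarrow> (of_int (int (s + 1) * D) :: real) = of_int (24 * n)"
      for n :: int
      unfolding assms(2) by (simp add: field_simps)
    then show ?thesis by (simp only: of_int_eq_iff dvd_def)
  qed
  show ?thesis
    unfolding cartan_braid_of[OF assms(1)] first_cond second_cond
    using assms(4,5) by (subst Least_equality[of _ s\<^sub>0]; auto simp: not_less[symmetric])
qed

lemma refl_braiding_braid_of:
  "refl_braiding (braid_of m) k = braid_of (refl_gram (braid_of m) m k)"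
proof (intro ext)
  fix i j
  show "refl_braiding (braid_of m) k i j = braid_of (refl_gram (braid_of m) m k) i j"
    unfolding refl_braiding_def braid_of_eq_exp_i_pi exp_i_pi_power_int exp_i_pi_add[symmetric]
    by (rule arg_cong[where f = exp_i_pi]) (simp add: refl_gram_def algebra_simps)
qed

definition gram_eq_on :: "nat \<Rightarrow> gram \<Rightarrow> gram \<Rightarrow> bool" where
  "gram_eq_on n m M \<longleftrightarrow> (\<forall>i<n. \<forall>j<n. m i j = M i j)"

lemma gram_eq_on_trans: "gram_eq_on n m M \<Longrightarrow> gram_eq_on n M M' \<Longrightarrow> gram_eq_on n m M'"
  unfolding gram_eq_on_def by simp

lemma cartan_braid_of_cong:
  "gram_eq_on n m M \<Longrightarrow> i < n \<Longrightarrow> j < n \<Longrightarrow> cartan (braid_of m) i j = cartan (braid_of M) i j"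
  unfolding cartan_def braid_of_def gram_eq_on_def by simp

lemma refl_gram_cong:
  assumes "gram_eq_on n m M" and "k < n"
  shows "gram_eq_on n (refl_gram (braid_of m) m k) (refl_gram (braid_of M) M k)"
  using assms cartan_braid_of_cong[OF assms(1) assms(2)]
  unfolding gram_eq_on_def refl_gram_def by simp

lemma pairs_ok_cong:
  assumes "gram_eq_on n m M"
  shows "pairs_ok n (braid_of m) m \<longleftrightarrow> pairs_ok n (braid_of M) M"
  using assms cartan_braid_of_cong[OF assms]
  unfolding pairs_ok_def condA_def condB_def gram_eq_on_def by simp

lemma realises_braid_of_if_reflection_closed:
  assumes "symmetric_gram n m" and "m \<in> S"
    and pairs_ok_S: "\<And>M. M \<in> S \<Longrightarrow> pairs_ok n (braid_of M) M"
    and refl_closed_S: "\<And>M k. M \<in> S \<Longrightarrow> k < n \<Longrightarrow> \<exists>M'\<in>S. gram_eq_on n (refl_gram (braid_of M) M k) M'"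
  shows "realises n m (braid_of m)"
proof -
  have refl_seq_in_S: "\<exists>m'' M. refl_seq (braid_of m', m') ks = (braid_of m'', m'') \<and> M \<in> S \<and> gram_eq_on n m'' M"
    if "M \<in> S" and "gram_eq_on n m' M" and "set ks \<subseteq> {..<n}" for m' M ks
    using that
  proof (induction ks arbitrary: m' M)
    case Nil
    then show ?case by auto
  next
    case (Cons k ks)
    then have "k < n" by simp
    then obtain M' where "M' \<in> S" "gram_eq_on n (refl_gram (braid_of M) M k) M'"
      using refl_closed_S \<open>M \<in> S\<close> by blast
    then have "gram_eq_on n (refl_gram (braid_of m') m' k) M'"
      using refl_gram_cong[OF \<open>gram_eq_on n m' M\<close> \<open>k < n\<close>] gram_eq_on_trans by blast
    with Cons.IH[OF \<open>M' \<in> S\<close>] Cons.prems(3) show ?case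
      by (simp add: refl_braiding_braid_of)
  qed
  have "pairs_ok n (fst (refl_seq (braid_of m, m) ks)) (snd (refl_seq (braid_of m, m) ks))"
    if ks: "set ks \<subseteq> {..<n}" for ks
  proof -
    have "gram_eq_on n m m"
      unfolding gram_eq_on_def by simp
    then obtain m'' M where "refl_seq (braid_of m, m) ks = (braid_of m'', m'')" "M \<in> S" "gram_eq_on n m'' M"
      using refl_seq_in_S[OF \<open>m \<in> S\<close> _ ks] by blast
    then show ?thesis
      using pairs_ok_S pairs_ok_cong by simp
  qed
  then show ?thesis
    using assms(1) unfolding realises_def braid_of_def by simp
qed

definition mII_swap :: gram where "mII_swap = mat2 1 (-3/4) (-3/4) (2/3)"
definition mIII_swap :: gram where "mIII_swap = mat2 1 (-1/4) (-1/4) (1/6)"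

definition chambers :: "gram set" where
  "chambers = {mI, mII, mII_swap, mIII, mIII_swap}"

lemmas chamber_defs = mI_def mII_def mIII_def mII_swap_def mIII_swap_def mat2_def

lemma all_less_2: "(\<forall>i<(2::nat). P i) \<longleftrightarrow> P 0 \<and> P 1"
  by (auto simp: numeral_2_eq_2 less_Suc_eq)

lemma sum_less_2: "(\<Sum>k<(2::nat). f k) = f 0 + f 1"
  by (simp add: numeral_2_eq_2)

lemma cartan_braid_of_mI:
  "cartan (braid_of mI) 0 1 = -2" "cartan (braid_of mI) 1 0 = -2"
proof -
  show "cartan (braid_of mI) 0 1 = -2"
    by (rule cartan_braid_of_twelfthsI[where D=8 and C="-14" and s\<^sub>0=2, THEN trans])
      (simp_all add: chamber_defs, presburger?)
  show "cartan (braid_of mI) 1 0 = -2"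
    by (rule cartan_braid_of_twelfthsI[where D=8 and C="-14" and s\<^sub>0=2, THEN trans])
      (simp_all add: chamber_defs, presburger?)
qed

lemma cartan_braid_of_mII:
  "cartan (braid_of mII) 0 1 = -2" "cartan (braid_of mII) 1 0 = -1"
proof -
  show "cartan (braid_of mII) 0 1 = -2"
    by (rule cartan_braid_of_twelfthsI[where D=8 and C="-18" and s\<^sub>0=2, THEN trans])
      (simp_all add: chamber_defs, presburger?)
  show "cartan (braid_of mII) 1 0 = -1"
    by (rule cartan_braid_of_twelfthsI[where D=12 and C="-18" and s\<^sub>0=1, THEN trans])
      (simp_all add: chamber_defs, presburger?)
qed

lemma cartan_braid_of_mII_swap:
  "cartan (braid_of mII_swap) 0 1 = -1" "cartan (braid_of mII_swap) 1 0 = -2"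
proof -
  show "cartan (braid_of mII_swap) 0 1 = -1"
    by (rule cartan_braid_of_twelfthsI[where D=12 and C="-18" and s\<^sub>0=1, THEN trans])
      (simp_all add: chamber_defs, presburger?)
  show "cartan (braid_of mII_swap) 1 0 = -2"
    by (rule cartan_braid_of_twelfthsI[where D=8 and C="-18" and s\<^sub>0=2, THEN trans])
      (simp_all add: chamber_defs, presburger?)
qed

lemma cartan_braid_of_mIII:
  "cartan (braid_of mIII) 0 1 = -3" "cartan (braid_of mIII) 1 0 = -1"
proof -
  show "cartan (braid_of mIII) 0 1 = -3"
    by (rule cartan_braid_of_twelfthsI[where D=2 and C="-6" and s\<^sub>0=3, THEN trans])
      (simp_all add: chamber_defs, presburger?)
  show "cartan (braid_of mIII) 1 0 = -1"
    by (rule cartan_braid_of_twelfthsI[where D=12 and C="-6" and s\<^sub>0=1, THEN trans])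
      (simp_all add: chamber_defs, presburger?)
qed

lemma cartan_braid_of_mIII_swap:
  "cartan (braid_of mIII_swap) 0 1 = -1" "cartan (braid_of mIII_swap) 1 0 = -3"
proof -
  show "cartan (braid_of mIII_swap) 0 1 = -1"
    by (rule cartan_braid_of_twelfthsI[where D=12 and C="-6" and s\<^sub>0=1, THEN trans])
      (simp_all add: chamber_defs, presburger?)
  show "cartan (braid_of mIII_swap) 1 0 = -3"
    by (rule cartan_braid_of_twelfthsI[where D=2 and C="-6" and s\<^sub>0=3, THEN trans])
      (simp_all add: chamber_defs, presburger?)
qed

lemma refl_gram_mI:
  "gram_eq_on 2 (refl_gram (braid_of mI) mI 0) mII"
  "gram_eq_on 2 (refl_gram (braid_of mI) mI 1) mII_swap"
  unfolding gram_eq_on_def all_less_2 refl_gram_def cartan_braid_of_mI cartan_diag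
  by (simp_all add: chamber_defs)

lemma refl_gram_mII:
  "gram_eq_on 2 (refl_gram (braid_of mII) mII 0) mI"
  "gram_eq_on 2 (refl_gram (braid_of mII) mII 1) mIII"
  unfolding gram_eq_on_def all_less_2 refl_gram_def cartan_braid_of_mII cartan_diag
  by (simp_all add: chamber_defs)

lemma refl_gram_mII_swap:
  "gram_eq_on 2 (refl_gram (braid_of mII_swap) mII_swap 0) mIII_swap"
  "gram_eq_on 2 (refl_gram (braid_of mII_swap) mII_swap 1) mI"
  unfolding gram_eq_on_def all_less_2 refl_gram_def cartan_braid_of_mII_swap cartan_diag
  by (simp_all add: chamber_defs)

lemma refl_gram_mIII:
  "gram_eq_on 2 (refl_gram (braid_of mIII) mIII 0) mIII"
  "gram_eq_on 2 (refl_gram (braid_of mIII) mIII 1) mII"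
  unfolding gram_eq_on_def all_less_2 refl_gram_def cartan_braid_of_mIII cartan_diag
  by (simp_all add: chamber_defs)

lemma refl_gram_mIII_swap:
  "gram_eq_on 2 (refl_gram (braid_of mIII_swap) mIII_swap 0) mII_swap"
  "gram_eq_on 2 (refl_gram (braid_of mIII_swap) mIII_swap 1) mIII_swap"
  unfolding gram_eq_on_def all_less_2 refl_gram_def cartan_braid_of_mIII_swap cartan_diag
  by (simp_all add: chamber_defs)

lemma chambers_refl_closed:
  assumes "M \<in> chambers" and "k < 2"
  shows "\<exists>M'\<in>chambers. gram_eq_on 2 (refl_gram (braid_of M) M k) M'"
proof -
  have "k = 0 \<or> k = 1"
    using assms(2) by auto
  then show ?thesis
    using assms(1) refl_gram_mI refl_gram_mII refl_gram_mII_swap refl_gram_mIII refl_gram_mIII_swap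
    unfolding chambers_def by auto
qed

lemma pairs_ok_chambers:
  "pairs_ok 2 (braid_of mI) mI" "pairs_ok 2 (braid_of mII) mII"
  "pairs_ok 2 (braid_of mII_swap) mII_swap" "pairs_ok 2 (braid_of mIII) mIII"
  "pairs_ok 2 (braid_of mIII_swap) mIII_swap"
  unfolding pairs_ok_def all_less_2 condA_def condB_def cartan_diag cartan_braid_of_mI
    cartan_braid_of_mII cartan_braid_of_mII_swap cartan_braid_of_mIII cartan_braid_of_mIII_swap
  by (simp_all add: chamber_defs)

lemma realises_mI: "realises 2 mI (braid_of mI)"
proof (rule realises_braid_of_if_reflection_closed[where S = chambers])
  show "symmetric_gram 2 mI"
    unfolding symmetric_gram_def all_less_2 by (simp add: chamber_defs)
  show "M \<in> chambers \<Longrightarrow> pairs_ok 2 (braid_of M) M" for M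
    using pairs_ok_chambers unfolding chambers_def by blast
  show "mI \<in> chambers"
    unfolding chambers_def by simp
qed (fact chambers_refl_closed)

lemma braid_of_mI:
  "braid_of mI 0 0 = - (zeta12 ^ 2)" "braid_of mI 1 1 = - (zeta12 ^ 2)"
  "braid_of mI 0 1 * braid_of mI 1 0 = zeta12"
  unfolding braid_of_eq_exp_i_pi zeta12_eq_exp_i_pi exp_i_pi_power exp_i_pi_add[symmetric]
    exp_i_pi_add_one[symmetric] exp_i_pi_eq_iff_Ints
  by (simp_all add: chamber_defs)

lemma braid_of_mII:
  "braid_of mII 0 0 = - (zeta12 ^ 2)" "braid_of mII 1 1 = - 1"
  "braid_of mII 0 1 * braid_of mII 1 0 = zeta12 ^ 3"
  unfolding braid_of_eq_exp_i_pi zeta12_eq_exp_i_pi exp_i_pi_power exp_i_pi_add[symmetric]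
    exp_i_pi_add_one[symmetric] exp_i_pi_one[symmetric] exp_i_pi_eq_iff_Ints
  by (simp_all add: chamber_defs)

lemma braid_of_mIII:
  "braid_of mIII 0 0 = - inverse zeta12" "braid_of mIII 1 1 = - 1"
  "braid_of mIII 0 1 * braid_of mIII 1 0 = - (zeta12 ^ 3)"
  unfolding braid_of_eq_exp_i_pi zeta12_eq_exp_i_pi exp_i_pi_power exp_i_pi_uminus[symmetric]
    exp_i_pi_add[symmetric] exp_i_pi_add_one[symmetric] exp_i_pi_one[symmetric] exp_i_pi_eq_iff_Ints
  by (simp_all add: chamber_defs)

lemma cartan_matrices:
  "\<forall>i<2. \<forall>j<2. cartan (braid_of mI) i j = mat2 2 (-2) (-2) 2 i j"
  "\<forall>i<2. \<forall>j<2. cartan (braid_of mII) i j = mat2 2 (-2) (-1) 2 i j"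
  "\<forall>i<2. \<forall>j<2. cartan (braid_of mIII) i j = mat2 2 (-3) (-1) 2 i j"
  unfolding all_less_2 cartan_diag cartan_braid_of_mI cartan_braid_of_mII cartan_braid_of_mIII
  by (simp_all add: mat2_def)

lemma mIII_congruent_mII: "\<forall>i<2. \<forall>j<2. mIII i j = (\<Sum>k<2. \<Sum>l<2. Pmat k i * mII k l * Pmat l j)"
  unfolding all_less_2 sum_less_2 by (simp add: chamber_defs Pmat_def)

lemma root_types:
  "m_truncation 2 (braid_of mI) mI 0" "m_truncation 2 (braid_of mI) mI 1"
  "m_truncation 2 (braid_of mII) mII 0" "m_truncation 2 (braid_of mII) mII 1"
  "m_cartan 2 (braid_of mIII) mIII 0" "\<not> m_truncation 2 (braid_of mIII) mIII 0"
  "m_truncation 2 (braid_of mIII) mIII 1"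
  unfolding m_truncation_def m_cartan_def all_less_2 condA_def condB_def
    cartan_braid_of_mI cartan_braid_of_mII cartan_braid_of_mIII
  by (simp_all add: chamber_defs)

theorem mainTheorem12:
  shows
   "braid_of mI 0 0 = - (zeta12 ^ 2) \<and> braid_of mI 1 1 = - (zeta12 ^ 2)
    \<and> braid_of mI 0 1 * braid_of mI 1 0 = zeta12
    \<and> (\<forall>i<2. \<forall>j<2. cartan (braid_of mI) i j = mat2 2 (-2) (-2) 2 i j)
    \<and> braid_of mII 0 0 = - (zeta12 ^ 2) \<and> braid_of mII 1 1 = - 1
    \<and> braid_of mII 0 1 * braid_of mII 1 0 = zeta12 ^ 3
    \<and> (\<forall>i<2. \<forall>j<2. cartan (braid_of mII) i j = mat2 2 (-2) (-1) 2 i j)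
    \<and> braid_of mIII 0 0 = - inverse zeta12 \<and> braid_of mIII 1 1 = - 1
    \<and> braid_of mIII 0 1 * braid_of mIII 1 0 = - (zeta12 ^ 3)
    \<and> (\<forall>i<2. \<forall>j<2. cartan (braid_of mIII) i j = mat2 2 (-3) (-1) 2 i j)
    \<and> (\<forall>i<2. \<forall>j<2. mII i j = refl_gram (braid_of mI) mI 0 i j)
    \<and> (\<forall>i<2. \<forall>j<2. mIII i j = (\<Sum>k<2. \<Sum>l<2. Pmat k i * mII k l * Pmat l j))
    \<and> (\<forall>i<2. \<forall>j<2. mIII i j = refl_gram (braid_of mII) mII 1 i j)
    \<and> realises 2 mI (braid_of mI)
    \<and> m_truncation 2 (braid_of mI) mI 0 \<and> m_truncation 2 (braid_of mI) mI 1
    \<and> m_truncation 2 (braid_of mII) mII 0 \<and> m_truncation 2 (braid_of mII) mII 1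
    \<and> m_cartan 2 (braid_of mIII) mIII 0 \<and> \<not> m_truncation 2 (braid_of mIII) mIII 0
    \<and> m_truncation 2 (braid_of mIII) mIII 1"
proof -
  have "\<forall>i<2. \<forall>j<2. mII i j = refl_gram (braid_of mI) mI 0 i j"
    "\<forall>i<2. \<forall>j<2. mIII i j = refl_gram (braid_of mII) mII 1 i j"
    using refl_gram_mI(1) refl_gram_mII(2) unfolding gram_eq_on_def by simp_all
  then show ?thesis
    using braid_of_mI braid_of_mII braid_of_mIII cartan_matrices mIII_congruent_mII
      realises_mI root_types by blast
qed

end
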